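(* If $\mathcal{M}_\times\perp\Sigma$ and $\mathcal{M}_\Sigma\perp E$, then $\mathcal{M}_\times\perp\mathsf{L}E$.
   Context: $\mathcal{E}$ is a locally cartesian closed category with a dominance: a class of monos (the $\Sigma$-monos) closed under pullback, identities and composition, classified by $\top:1\to\Sigma$ (each $\Sigma$-mono $U\to A$ is the pullback of $\top$ along a unique $A\to\Sigma$). $\mathsf{L}E=\sum_{\phi:\Sigma}E^{\phi}$ is the associated partial map classifier: maps $X\to\mathsf{L}E$ correspond to pairs of a $\Sigma$-mono $U\to X$ and a map $U\to E$. For a mono $m:I\to J$ and an object $E$, $m\perp E$ means every map $I\to E$ extends uniquely along $m$ to a map $J\to E$; for a class $\mathcal{N}$, $\mathcal{N}\perp E$ means $m\perp E$ for all $m\in\mathcal{N}$. Given a class $\mathcal{M}$ of monos, $\mathcal{M}_\times$ is the smallest class of monos containing $\mathcal{M}$ and stable under products (with arbitrary objects), and $\mathcal{M}_\Sigma$ is the smallest class of monos containing $\mathcal{M}_\times$ and stable under pullback along $\Sigma$-monos. *)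

theory Defs
  imports Main
begin

text \<open>A category is given by a set of objects, a set of arrows, source, target,
  composition (cmp C g f = g after f, defined when src g = trg f) and identities.\<close>

record ('o, 'a) cat =
  obj :: "'o set"
  arr :: "'a set"
  src :: "'a \<Rightarrow> 'o"
  trg :: "'a \<Rightarrow> 'o"
  cmp :: "'a \<Rightarrow> 'a \<Rightarrow> 'a"
  idt :: "'o \<Rightarrow> 'a"

definition hom :: "('o, 'a) cat \<Rightarrow> 'o \<Rightarrow> 'o \<Rightarrow> 'a set" where
  "hom C X Y = {f \<in> arr C. src C f = X \<and> trg C f = Y}"

definition category :: "('o, 'a) cat \<Rightarrow> bool" where
  "category C \<longleftrightarrow>
     (\<forall>f \<in> arr C. src C f \<in> obj C \<and> trg C f \<in> obj C) \<and>
     (\<forall>X \<in> obj C. idt C X \<in> hom C X X) \<and>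
     (\<forall>f \<in> arr C. \<forall>g \<in> arr C. src C g = trg C f \<longrightarrow>
        cmp C g f \<in> hom C (src C f) (trg C g)) \<and>
     (\<forall>f \<in> arr C. cmp C f (idt C (src C f)) = f \<and> cmp C (idt C (trg C f)) f = f) \<and>
     (\<forall>f \<in> arr C. \<forall>g \<in> arr C. \<forall>h \<in> arr C.
        src C g = trg C f \<longrightarrow> src C h = trg C g \<longrightarrow>
        cmp C h (cmp C g f) = cmp C (cmp C h g) f)"

definition is_mono :: "('o, 'a) cat \<Rightarrow> 'a \<Rightarrow> bool" where
  "is_mono C m \<longleftrightarrow> m \<in> arr C \<and>
     (\<forall>g \<in> arr C. \<forall>h \<in> arr C. trg C g = src C m \<longrightarrow> trg C h = src C m \<longrightarrow>
        src C g = src C h \<longrightarrow> cmp C m g = cmp C m h \<longrightarrow> g = h)"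

definition terminal :: "('o, 'a) cat \<Rightarrow> 'o \<Rightarrow> bool" where
  "terminal C T \<longleftrightarrow> T \<in> obj C \<and> (\<forall>X \<in> obj C. \<exists>!t. t \<in> hom C X T)"

definition is_pullback :: "('o, 'a) cat \<Rightarrow> 'a \<Rightarrow> 'a \<Rightarrow> 'a \<Rightarrow> 'a \<Rightarrow> bool" where
  "is_pullback C f g p q \<longleftrightarrow>
     f \<in> arr C \<and> g \<in> arr C \<and> p \<in> arr C \<and> q \<in> arr C \<and>
     trg C f = trg C g \<and> trg C p = src C f \<and> trg C q = src C g \<and> src C p = src C q \<and>
     cmp C f p = cmp C g q \<and>
     (\<forall>p' \<in> arr C. \<forall>q' \<in> arr C.
        trg C p' = src C f \<longrightarrow> trg C q' = src C g \<longrightarrow> src C p' = src C q' \<longrightarrow>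
        cmp C f p' = cmp C g q' \<longrightarrow>
        (\<exists>!u. u \<in> hom C (src C p') (src C p) \<and> cmp C p u = p' \<and> cmp C q u = q'))"

definition is_product :: "('o, 'a) cat \<Rightarrow> 'o \<Rightarrow> 'o \<Rightarrow> 'o \<Rightarrow> 'a \<Rightarrow> 'a \<Rightarrow> bool" where
  "is_product C A B P p1 p2 \<longleftrightarrow>
     P \<in> obj C \<and> p1 \<in> hom C P A \<and> p2 \<in> hom C P B \<and>
     (\<forall>Y \<in> obj C. \<forall>f1 \<in> hom C Y A. \<forall>f2 \<in> hom C Y B.
        \<exists>!u. u \<in> hom C Y P \<and> cmp C p1 u = f1 \<and> cmp C p2 u = f2)"

definition has_pullbacks :: "('o, 'a) cat \<Rightarrow> bool" where
  "has_pullbacks C \<longleftrightarrow> (\<forall>f \<in> arr C. \<forall>g \<in> arr C. trg C f = trg C g \<longrightarrow>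
     (\<exists>p q. is_pullback C f g p q))"

text \<open>Dependent products: for every f : A \<rightarrow> B the pullback functor
  f^* : C/B \<rightarrow> C/A has a right adjoint \<Pi>_f.  Given g : X \<rightarrow> A, the object
  p : \<Pi> \<rightarrow> B together with the counit ev : f^*\<Pi> \<rightarrow> X over A is universal.\<close>

definition has_dependent_products :: "('o, 'a) cat \<Rightarrow> bool" where
  "has_dependent_products C \<longleftrightarrow>
    (\<forall>f \<in> arr C. \<forall>g \<in> arr C. trg C g = src C f \<longrightarrow>
      (\<exists>p q1 q2 ev.
         p \<in> arr C \<and> trg C p = trg C f \<and>
         is_pullback C f p q1 q2 \<and>
         ev \<in> hom C (src C q1) (src C g) \<and> cmp C g ev = q1 \<and>
         (\<forall>h \<in> arr C. \<forall>z1 z2 k. trg C h = trg C f \<longrightarrow> is_pullback C f h z1 z2 \<longrightarrow>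
            k \<in> hom C (src C z1) (src C g) \<longrightarrow> cmp C g k = z1 \<longrightarrow>
            (\<exists>!u. u \<in> hom C (src C h) (src C p) \<and> cmp C p u = h \<and>
               (\<forall>w. w \<in> hom C (src C z1) (src C q1) \<longrightarrow> cmp C q1 w = z1 \<longrightarrow>
                    cmp C q2 w = cmp C u z2 \<longrightarrow> cmp C ev w = k)))))"

definition lccc :: "('o, 'a) cat \<Rightarrow> bool" where
  "lccc C \<longleftrightarrow> category C \<and> (\<exists>T. terminal C T) \<and> has_pullbacks C \<and>
     has_dependent_products C"

text \<open>D is the class of \<Sigma>-monos; it is classified by tp : 1 \<rightarrow> Sig: an arrow is a
  \<Sigma>-mono iff it is the pullback of tp along a unique arrow into Sig.\<close>

definition dominance :: "('o, 'a) cat \<Rightarrow> 'a set \<Rightarrow> 'o \<Rightarrow> 'a \<Rightarrow> 'o \<Rightarrow> bool" where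
  "dominance C D one tp Sig \<longleftrightarrow>
     terminal C one \<and> Sig \<in> obj C \<and> tp \<in> hom C one Sig \<and>
     (\<forall>m \<in> D. is_mono C m) \<and>
     (\<forall>X \<in> obj C. idt C X \<in> D) \<and>
     (\<forall>m \<in> D. \<forall>n \<in> D. src C n = trg C m \<longrightarrow> cmp C n m \<in> D) \<and>
     (\<forall>m \<in> D. \<forall>g p q. is_pullback C m g p q \<longrightarrow> q \<in> D) \<and>
     (\<forall>m. m \<in> D \<longleftrightarrow> m \<in> arr C \<and>
        (\<exists>!\<chi>. \<chi> \<in> hom C (trg C m) Sig \<and> (\<exists>t. is_pullback C \<chi> tp m t)))"

definition partial_map_classifier ::
  "('o, 'a) cat \<Rightarrow> 'a set \<Rightarrow> 'o \<Rightarrow> 'o \<Rightarrow> 'a \<Rightarrow> bool" where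
  "partial_map_classifier C D E LE eta \<longleftrightarrow>
     E \<in> obj C \<and> LE \<in> obj C \<and> eta \<in> hom C E LE \<and> eta \<in> D \<and>
     (\<forall>m \<in> D. \<forall>f \<in> hom C (src C m) E.
        \<exists>!g. g \<in> hom C (trg C m) LE \<and> is_pullback C g eta m f)"

definition orth :: "('o, 'a) cat \<Rightarrow> 'a \<Rightarrow> 'o \<Rightarrow> bool" where
  "orth C m E \<longleftrightarrow> (\<forall>f \<in> hom C (src C m) E.
      \<exists>!g. g \<in> hom C (trg C m) E \<and> cmp C g m = f)"

definition orth_class :: "('o, 'a) cat \<Rightarrow> 'a set \<Rightarrow> 'o \<Rightarrow> bool" where
  "orth_class C N E \<longleftrightarrow> (\<forall>m \<in> N. orth C m E)"

text \<open>M_times: smallest class containing M and stable under products m \<times> X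
  (for any choice of the products involved).\<close>

inductive_set Mtimes :: "('o, 'a) cat \<Rightarrow> 'a set \<Rightarrow> 'a set" for C M where
  base: "m \<in> M \<Longrightarrow> m \<in> Mtimes C M"
| prod: "\<lbrakk> m \<in> Mtimes C M; X \<in> obj C;
           is_product C (src C m) X P p1 p2; is_product C (trg C m) X Q q1 q2;
           u \<in> hom C P Q; cmp C q1 u = cmp C m p1; cmp C q2 u = p2 \<rbrakk>
         \<Longrightarrow> u \<in> Mtimes C M"

inductive_set MSigma :: "('o, 'a) cat \<Rightarrow> 'a set \<Rightarrow> 'a set \<Rightarrow> 'a set" for C D M where
  base: "m \<in> Mtimes C M \<Longrightarrow> m \<in> MSigma C D M"
| pb: "\<lbrakk> m \<in> MSigma C D M; u \<in> D; is_pullback C m u p q \<rbrakk> \<Longrightarrow> q \<in> MSigma C D M"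

end

theory Submission
  imports Defs
begin

text \<open>A map f : I \<rightarrow> LE is a \<Sigma>-partial map (u : U \<rightarrow> I, e : U \<rightarrow> E). Let \<sigma> : LE \<rightarrow> \<Sigma> classify
  \<eta>. Since m : I \<rightarrow> J is orthogonal to \<Sigma>, the classifier \<sigma> f of u extends uniquely to
  \<chi> : J \<rightarrow> \<Sigma>; the \<Sigma>-mono v : V \<rightarrow> J classified by \<chi> restricts along m to u, so the induced
  w : U \<rightarrow> V is a pullback of m along a \<Sigma>-mono and hence lies in M_\<Sigma>. Therefore e extends
  uniquely along w to e' : V \<rightarrow> E, and the partial map (v, e') is classified by the required
  extension g of f. For uniqueness, any extension g' satisfies \<sigma> g' = \<chi> by orthogonality
  to \<Sigma>, so it classifies a partial map with domain v, whose E-component restricts to e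
  because \<eta> is mono, and is therefore e'.\<close>

lemma ex1_unique: "\<exists>!x. P x \<Longrightarrow> P a \<Longrightarrow> P b \<Longrightarrow> a = b"
  by blast

lemma orth_extend:
  assumes "orth C m E" "f \<in> hom C (src C m) E"
  obtains g where "g \<in> hom C (trg C m) E" "cmp C g m = f"
  using assms unfolding orth_def by blast

lemma mono_cancel:
  assumes "is_mono C m" "g \<in> arr C" "h \<in> arr C" "trg C g = src C m" "trg C h = src C m"
    and "src C g = src C h" "cmp C m g = cmp C m h"
  shows "g = h"
  using assms unfolding is_mono_def by blast

lemma pullback_square:
  assumes "is_pullback C f g p q"
  shows "f \<in> arr C" "g \<in> arr C" "p \<in> arr C" "q \<in> arr C"
    and "trg C f = trg C g" "trg C p = src C f" "trg C q = src C g" "src C p = src C q"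
    and "cmp C f p = cmp C g q"
  using assms unfolding is_pullback_def by blast+

lemma pullback_sym: "is_pullback C f g p q \<Longrightarrow> is_pullback C g f q p"
  unfolding is_pullback_def by metis

lemma pullback_universal:
  assumes "is_pullback C f g p q" "a \<in> arr C" "b \<in> arr C"
    and "trg C a = src C f" "trg C b = src C g" "src C a = src C b" "cmp C f a = cmp C g b"
  shows "\<exists>!u. u \<in> hom C (src C a) (src C p) \<and> cmp C p u = a \<and> cmp C q u = b"
  using assms unfolding is_pullback_def by blast

lemma pullback_lift:
  assumes "is_pullback C f g p q" "a \<in> arr C" "b \<in> arr C"
    and "trg C a = src C f" "trg C b = src C g" "src C a = src C b" "cmp C f a = cmp C g b"
  obtains u where "u \<in> hom C (src C a) (src C p)" "cmp C p u = a" "cmp C q u = b"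
  using pullback_universal[OF assms] by blast

locale categorical =
  fixes C :: "('o, 'a) cat"
  assumes category: "category C"
begin

lemma
  assumes "f \<in> arr C" "g \<in> arr C" "src C g = trg C f"
  shows comp_arr [simp]: "cmp C g f \<in> arr C"
    and src_comp [simp]: "src C (cmp C g f) = src C f"
    and trg_comp [simp]: "trg C (cmp C g f) = trg C g"
  using assms category unfolding category_def hom_def by blast+

lemma comp_assoc:
  assumes "f \<in> arr C" "g \<in> arr C" "h \<in> arr C" "src C g = trg C f" "src C h = trg C g"
  shows "cmp C (cmp C h g) f = cmp C h (cmp C g f)"
  using assms category unfolding category_def by metis

lemma orth_unique:
  assumes "orth C m E" "m \<in> arr C" "g \<in> hom C (trg C m) E" "g' \<in> hom C (trg C m) E"
    and "cmp C g m = cmp C g' m"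
  shows "g = g'"
proof -
  have "cmp C g m \<in> hom C (src C m) E"
    using assms(2,3) by (simp add: hom_def)
  then show ?thesis
    using assms(1,3-5) unfolding orth_def by metis
qed

lemma pullback_lift_unique:
  assumes pb: "is_pullback C f g p q"
    and u: "u \<in> hom C X (src C p)" and u': "u' \<in> hom C X (src C p)"
    and "cmp C p u = cmp C p u'" "cmp C q u = cmp C q u'"
  shows "u = u'"
proof -
  note sq = pullback_square[OF pb]
  have ar: "u \<in> arr C" "src C u = X" "trg C u = src C p" "u' \<in> arr C"
    using u u' by (auto simp: hom_def)
  have "cmp C f (cmp C p u) = cmp C g (cmp C q u)"
    using sq ar by (metis comp_assoc)
  then have "\<exists>!v. v \<in> hom C X (src C p) \<and> cmp C p v = cmp C p u \<and> cmp C q v = cmp C q u"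
    using pullback_universal[OF pb, of "cmp C p u" "cmp C q u"] sq ar by simp
  then show ?thesis
    by (rule ex1_unique) (use u u' assms(4,5) in auto)
qed

lemma is_pullbackI:
  assumes sq: "f \<in> arr C" "g \<in> arr C" "p \<in> arr C" "q \<in> arr C"
    "trg C f = trg C g" "trg C p = src C f" "trg C q = src C g" "src C p = src C q"
    "cmp C f p = cmp C g q"
    and lift: "\<And>a b. a \<in> arr C \<Longrightarrow> b \<in> arr C \<Longrightarrow>
      trg C a = src C f \<Longrightarrow> trg C b = src C g \<Longrightarrow> src C a = src C b \<Longrightarrow> cmp C f a = cmp C g b \<Longrightarrow>
      \<exists>u. u \<in> hom C (src C a) (src C p) \<and> cmp C p u = a \<and> cmp C q u = b"
    and unique: "\<And>X u u'. u \<in> hom C X (src C p) \<Longrightarrow> u' \<in> hom C X (src C p) \<Longrightarrow>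
      cmp C p u = cmp C p u' \<Longrightarrow> cmp C q u = cmp C q u' \<Longrightarrow> u = u'"
  shows "is_pullback C f g p q"
proof -
  have "\<exists>!u. u \<in> hom C (src C a) (src C p) \<and> cmp C p u = a \<and> cmp C q u = b"
    if cone: "a \<in> arr C" "b \<in> arr C" "trg C a = src C f" "trg C b = src C g"
      "src C a = src C b" "cmp C f a = cmp C g b" for a b
  proof -
    obtain u where u: "u \<in> hom C (src C a) (src C p)" "cmp C p u = a" "cmp C q u = b"
      using lift[OF cone] by blast
    show ?thesis
    proof (rule ex1I[of _ u])
      show "\<And>u'. u' \<in> hom C (src C a) (src C p) \<and> cmp C p u' = a \<and> cmp C q u' = b \<Longrightarrow> u' = u"
        using unique u by metis
    qed (use u in blast)
  qed
  then show ?thesis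
    unfolding is_pullback_def using sq by blast
qed

lemma pullback_paste:
  assumes R: "is_pullback C f g p q" and L: "is_pullback C h p r s"
  shows "is_pullback C (cmp C f h) g r (cmp C q s)"
proof -
  note R' = pullback_square[OF R] and L' = pullback_square[OF L]
  show ?thesis
  proof (rule is_pullbackI)
    have "cmp C (cmp C f h) r = cmp C f (cmp C p s)"
      using R' L' by (simp add: comp_assoc)
    also have "\<dots> = cmp C g (cmp C q s)"
      using R' L' by (simp flip: comp_assoc)
    finally show "cmp C (cmp C f h) r = cmp C g (cmp C q s)" .
  next
    fix a b
    assume cone: "a \<in> arr C" "b \<in> arr C" "trg C a = src C (cmp C f h)" "trg C b = src C g"
      "src C a = src C b" "cmp C (cmp C f h) a = cmp C g b"
    have a: "trg C a = src C h"
      using cone(3) R' L' by simp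
    have "cmp C f (cmp C h a) = cmp C g b"
      using cone(1,6) a R' L' by (simp add: comp_assoc)
    then obtain u1 where u1: "u1 \<in> hom C (src C a) (src C p)"
        "cmp C p u1 = cmp C h a" "cmp C q u1 = b"
      using pullback_lift[OF R, of "cmp C h a" b] cone a R' L' by auto
    then obtain u where u: "u \<in> hom C (src C a) (src C r)" "cmp C r u = a" "cmp C s u = u1"
      using pullback_lift[OF L, of a u1] cone a R' by (auto simp: hom_def)
    then show "\<exists>u. u \<in> hom C (src C a) (src C r) \<and> cmp C r u = a \<and> cmp C (cmp C q s) u = b"
      using u1 R' L' by (auto simp: hom_def comp_assoc)
  next
    fix X u u'
    assume u: "u \<in> hom C X (src C r)" "u' \<in> hom C X (src C r)"
      and eq: "cmp C r u = cmp C r u'" "cmp C (cmp C q s) u = cmp C (cmp C q s) u'"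
    have ar: "u \<in> arr C" "src C u = X" "trg C u = src C r"
      "u' \<in> arr C" "src C u' = X" "trg C u' = src C r"
      using u by (auto simp: hom_def)
    have "cmp C p (cmp C s u) = cmp C h (cmp C r u)" "cmp C p (cmp C s u') = cmp C h (cmp C r u')"
      using ar R' L' by (simp_all flip: comp_assoc)
    moreover have "cmp C q (cmp C s u) = cmp C q (cmp C s u')"
      using eq(2) ar R' L' by (simp add: comp_assoc)
    ultimately have "cmp C s u = cmp C s u'"
      using pullback_lift_unique[OF R, of "cmp C s u" X "cmp C s u'"] eq(1) ar L' by (simp add: hom_def)
    then show "u = u'"
      using pullback_lift_unique[OF L] u eq(1) by blast
  qed (use R' L' in auto)
qed

lemma pullback_cancel:
  assumes R: "is_pullback C f g p q"
    and sq: "h \<in> arr C" "r \<in> arr C" "s \<in> arr C" "trg C h = trg C p" "trg C r = src C h"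
      "trg C s = src C p" "src C r = src C s" "cmp C h r = cmp C p s"
    and O: "is_pullback C (cmp C f h) g r (cmp C q s)"
  shows "is_pullback C h p r s"
proof -
  note R' = pullback_square[OF R]
  show ?thesis
  proof (rule is_pullbackI)
    fix a b
    assume cone: "a \<in> arr C" "b \<in> arr C" "trg C a = src C h" "trg C b = src C p"
      "src C a = src C b" "cmp C h a = cmp C p b"
    have "cmp C (cmp C f h) a = cmp C f (cmp C p b)"
      using cone sq R' by (simp add: comp_assoc)
    also have "\<dots> = cmp C g (cmp C q b)"
      using cone R' by (simp flip: comp_assoc)
    finally obtain u where u: "u \<in> hom C (src C a) (src C r)" "cmp C r u = a"
        "cmp C (cmp C q s) u = cmp C q b"
      using pullback_lift[OF O, of a "cmp C q b"] cone sq R' by auto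
    have ar: "u \<in> arr C" "src C u = src C a" "trg C u = src C r"
      using u(1) by (auto simp: hom_def)
    have "cmp C p (cmp C s u) = cmp C (cmp C h r) u"
      using ar sq R' by (simp add: comp_assoc)
    also have "\<dots> = cmp C p b"
      using ar u(2) cone(6) sq(1-7) by (simp add: comp_assoc)
    finally have "cmp C p (cmp C s u) = cmp C p b" .
    moreover have "cmp C q (cmp C s u) = cmp C q b"
      using ar u(3) sq R' by (simp add: comp_assoc)
    ultimately have "cmp C s u = b"
      using pullback_lift_unique[OF R, of "cmp C s u" "src C a" b] ar cone sq by (simp add: hom_def)
    then show "\<exists>u. u \<in> hom C (src C a) (src C r) \<and> cmp C r u = a \<and> cmp C s u = b"
      using u by blast
  next
    fix X u u'
    assume u: "u \<in> hom C X (src C r)" "u' \<in> hom C X (src C r)"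
      and eq: "cmp C r u = cmp C r u'" "cmp C s u = cmp C s u'"
    have "cmp C (cmp C q s) u = cmp C (cmp C q s) u'"
      using u eq(2) sq R' by (simp add: comp_assoc hom_def)
    then show "u = u'"
      using pullback_lift_unique[OF O] u eq(1) by blast
  qed (use sq R' in auto)
qed

lemma pullback_factor:
  assumes R: "is_pullback C f g p q" and h: "h \<in> arr C" "trg C h = src C f"
    and O: "is_pullback C (cmp C f h) g r t"
  obtains s where "is_pullback C h p r s" "cmp C q s = t"
proof -
  note R' = pullback_square[OF R] and O' = pullback_square[OF O]
  have r: "trg C r = src C h"
    using O' h R' by simp
  have "cmp C f (cmp C h r) = cmp C g t"
    using O' h r R' by (simp add: comp_assoc)
  then obtain s where s: "s \<in> hom C (src C r) (src C p)" "cmp C p s = cmp C h r" "cmp C q s = t"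
    using pullback_lift[OF R, of "cmp C h r" t] h r O' R' by auto
  have "is_pullback C h p r s"
    by (rule pullback_cancel[OF R]) (use h r s O' R' O in \<open>auto simp: hom_def\<close>)
  then show thesis
    using s(3) that by blast
qed

end

locale sigma_dominance = categorical C for C :: "('o, 'a) cat" +
  fixes D :: "'a set" and one Sig :: 'o and tp :: 'a
  assumes has_pullbacks: "has_pullbacks C"
    and dominance: "dominance C D one tp Sig"
begin

lemma D_mono: "m \<in> D \<Longrightarrow> is_mono C m"
  using dominance unfolding dominance_def by blast

lemma D_pullback: "m \<in> D \<Longrightarrow> is_pullback C m g p q \<Longrightarrow> q \<in> D"
  using dominance unfolding dominance_def by blast

lemma D_iff:
  "m \<in> D \<longleftrightarrow>
    m \<in> arr C \<and> (\<exists>!\<chi>. \<chi> \<in> hom C (trg C m) Sig \<and> (\<exists>t. is_pullback C \<chi> tp m t))"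
  using dominance unfolding dominance_def by blast

lemma pullback_exists:
  assumes "f \<in> arr C" "g \<in> arr C" "trg C f = trg C g"
  obtains p q where "is_pullback C f g p q"
  using has_pullbacks assms unfolding has_pullbacks_def by blast

lemma classifier_in_hom: "is_pullback C \<chi> tp m t \<Longrightarrow> \<chi> \<in> hom C (trg C m) Sig"
  using dominance pullback_square[of C \<chi> tp m t] unfolding dominance_def hom_def by auto

lemma classifierE:
  assumes "m \<in> D"
  obtains \<chi> t where "is_pullback C \<chi> tp m t"
  using assms D_iff by blast

lemma classifier_unique:
  assumes "m \<in> D" "is_pullback C \<chi> tp m t" "is_pullback C \<chi>' tp m t'"
  shows "\<chi> = \<chi>'"
  using assms D_iff classifier_in_hom by (metis ex1_unique)

lemma classified_by_orth_extension_in_D: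
  assumes orth: "orth C m Sig" and u: "u \<in> D" "is_pullback C (cmp C \<chi> m) tp u t"
    and v: "is_pullback C \<chi> tp v s" and mv: "is_pullback C m v u w"
  shows "v \<in> D"
proof -
  \<comment> \<open>Membership in D demands that \<chi> be the only classifier of v; any other one
    restricts along m to a classifier of u.\<close>
  note mv' = pullback_square[OF mv]
  have \<chi>: "\<chi> \<in> hom C (trg C m) Sig"
    using classifier_in_hom[OF v] mv' by simp
  have "\<chi>' = \<chi>" if v': "\<chi>' \<in> hom C (trg C v) Sig \<and> (\<exists>t'. is_pullback C \<chi>' tp v t')" for \<chi>'
  proof -
    obtain t' where "is_pullback C \<chi>' tp v t'"
      using v' by blast
    then have "is_pullback C (cmp C \<chi>' m) tp u (cmp C t' w)"
      using pullback_paste mv by blast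
    then have "cmp C \<chi>' m = cmp C \<chi> m"
      using classifier_unique u by blast
    then show "\<chi>' = \<chi>"
      using orth_unique[OF orth] \<chi> v' mv' by simp
  qed
  then show ?thesis
    unfolding D_iff using \<chi> v mv' pullback_square[OF v] by auto
qed

end

locale sigma_partial_map_classifier = sigma_dominance +
  fixes E LE :: 'o and eta :: 'a
  assumes partial_map_classifier: "partial_map_classifier C D E LE eta"
begin

lemma eta_in_D: "eta \<in> D"
  and eta_in_hom: "eta \<in> hom C E LE"
  using partial_map_classifier unfolding partial_map_classifier_def by blast+

lemma classify:
  assumes "m \<in> D" "f \<in> hom C (src C m) E"
  obtains g where "g \<in> hom C (trg C m) LE" "is_pullback C g eta m f"
  using partial_map_classifier assms unfolding partial_map_classifier_def by blast

lemma classify_unique: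
  assumes m: "m \<in> D" and g: "is_pullback C g eta m f" and g': "is_pullback C g' eta m f"
  shows "g = g'"
proof -
  note sq = pullback_square[OF g] pullback_square[OF g']
  have "f \<in> hom C (src C m) E"
    using sq eta_in_hom by (auto simp: hom_def)
  then have "\<exists>!g. g \<in> hom C (trg C m) LE \<and> is_pullback C g eta m f"
    using partial_map_classifier m unfolding partial_map_classifier_def by blast
  then show ?thesis
    by (rule ex1_unique) (use g g' sq eta_in_hom in \<open>auto simp: hom_def\<close>)
qed

lemma LE_map_eqI:
  assumes \<sigma>: "is_pullback C \<sigma> tp eta tE" and \<chi>: "is_pullback C \<chi> tp v s" and v: "v \<in> D"
    and mv: "is_pullback C m v u w" and w: "orth C w E"
    and g: "g \<in> hom C (trg C m) LE" "cmp C \<sigma> g = \<chi>"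
    and g': "g' \<in> hom C (trg C m) LE" "cmp C \<sigma> g' = \<chi>"
    and eq: "cmp C g m = cmp C g' m"
  shows "g = g'"
proof -
  note \<sigma>' = pullback_square[OF \<sigma>] and mv' = pullback_square[OF mv]
  have restrict: "\<exists>e. e \<in> hom C (trg C w) E \<and> is_pullback C h eta v e \<and>
      cmp C eta (cmp C e w) = cmp C (cmp C h m) u"
    if h: "h \<in> hom C (trg C m) LE" "cmp C \<sigma> h = \<chi>" for h
  proof -
    have h': "h \<in> arr C" "src C h = trg C m" "trg C h = src C \<sigma>"
      using h(1) \<sigma>' eta_in_hom by (auto simp: hom_def)
    obtain e where e: "is_pullback C h eta v e"
      using pullback_factor[OF \<sigma> h'(1,3)] \<chi> h(2) by blast
    note e' = pullback_square[OF e]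
    have "cmp C eta (cmp C e w) = cmp C h (cmp C v w)"
      using e' mv' by (simp flip: comp_assoc)
    also have "\<dots> = cmp C (cmp C h m) u"
      using h' mv' by (simp add: comp_assoc)
    finally show ?thesis
      using e e' mv' eta_in_hom by (auto simp: hom_def)
  qed
  obtain e where e: "e \<in> hom C (trg C w) E" "is_pullback C g eta v e"
      "cmp C eta (cmp C e w) = cmp C (cmp C g m) u"
    using restrict[OF g] by blast
  obtain e' where e': "e' \<in> hom C (trg C w) E" "is_pullback C g' eta v e'"
      "cmp C eta (cmp C e' w) = cmp C (cmp C g' m) u"
    using restrict[OF g'] by blast
  have "cmp C e w = cmp C e' w"
    using mono_cancel[OF D_mono[OF eta_in_D]] e(1,3) e'(1,3) eq mv' eta_in_hom by (simp add: hom_def)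
  then have "e = e'"
    using orth_unique[OF w] e(1) e'(1) mv' by simp
  then show ?thesis
    using classify_unique[OF v e(2)] e'(2) by simp
qed

lemma domain_of_definition_extends:
  assumes m: "m \<in> arr C" and orth_Sig: "orth C m Sig"
    and \<sigma>: "is_pullback C \<sigma> tp eta tE" and f: "f \<in> hom C (src C m) LE"
  obtains \<chi> v s u w e where "\<chi> \<in> hom C (trg C m) Sig" "cmp C \<chi> m = cmp C \<sigma> f"
    "is_pullback C \<chi> tp v s" "v \<in> D" "is_pullback C m v u w"
    "u \<in> D" "is_pullback C f eta u e"
proof -
  obtain e u where eta_f: "is_pullback C eta f e u"
    using pullback_exists[of eta f] f eta_in_hom by (auto simp: hom_def)
  have u: "u \<in> D"
    using D_pullback[OF eta_in_D eta_f] .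
  note fu = pullback_sym[OF eta_f]
  have \<sigma>f: "is_pullback C (cmp C \<sigma> f) tp u (cmp C tE e)"
    using pullback_paste[OF \<sigma> fu] .
  obtain \<chi> where \<chi>: "\<chi> \<in> hom C (trg C m) Sig" and \<chi>m: "cmp C \<chi> m = cmp C \<sigma> f"
    using orth_extend[OF orth_Sig] classifier_in_hom[OF \<sigma>f] pullback_square[OF fu] f
    by (auto simp: hom_def)
  obtain v s where v: "is_pullback C \<chi> tp v s"
    using pullback_exists[of \<chi> tp] \<chi> classifier_in_hom[OF \<sigma>] pullback_square[OF \<sigma>]
    by (auto simp: hom_def)
  obtain w where mv: "is_pullback C m v u w"
    using pullback_factor[OF v m, of u "cmp C tE e"] \<chi> \<sigma>f \<chi>m by (auto simp: hom_def)
  have "v \<in> D"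
    using classified_by_orth_extension_in_D[OF orth_Sig u _ v mv] \<sigma>f \<chi>m by simp
  then show thesis
    using that \<chi> \<chi>m v mv u fu by blast
qed

lemma orth_LE:
  assumes m: "m \<in> arr C" and orth_Sig: "orth C m Sig"
    and orth_E: "\<And>u v w. v \<in> D \<Longrightarrow> is_pullback C m v u w \<Longrightarrow> orth C w E"
  shows "orth C m LE"
  unfolding orth_def
proof
  fix f
  assume f: "f \<in> hom C (src C m) LE"
  obtain \<sigma> tE where \<sigma>: "is_pullback C \<sigma> tp eta tE"
    using classifierE[OF eta_in_D] .
  obtain \<chi> v s u w e where \<chi>: "\<chi> \<in> hom C (trg C m) Sig" "cmp C \<chi> m = cmp C \<sigma> f"
    and v: "is_pullback C \<chi> tp v s" "v \<in> D" and mv: "is_pullback C m v u w"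
    and u: "u \<in> D" "is_pullback C f eta u e"
    using domain_of_definition_extends[OF m orth_Sig \<sigma> f] .
  note mv' = pullback_square[OF mv] and fu' = pullback_square[OF u(2)]
  obtain e' where e': "e' \<in> hom C (trg C w) E" "cmp C e' w = e"
    using orth_extend[OF orth_E[OF v(2) mv]] fu' mv' eta_in_hom by (auto simp: hom_def)
  obtain g where g: "g \<in> hom C (trg C v) LE" "is_pullback C g eta v e'"
    using classify[OF v(2)] e' mv' by auto
  have "is_pullback C (cmp C g m) eta u e"
    using pullback_paste[OF g(2) mv] e'(2) by simp
  then have gm: "cmp C g m = f"
    using classify_unique[OF u(1)] u(2) by blast
  have \<sigma>_eq: "cmp C \<sigma> h = \<chi>" if h: "h \<in> hom C (trg C m) LE" "cmp C h m = f" for h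
  proof (rule orth_unique[OF orth_Sig m _ \<chi>(1)])
    show "cmp C \<sigma> h \<in> hom C (trg C m) Sig"
      using h(1) classifier_in_hom[OF \<sigma>] eta_in_hom by (auto simp: hom_def)
    show "cmp C (cmp C \<sigma> h) m = cmp C \<chi> m"
      using h classifier_in_hom[OF \<sigma>] eta_in_hom m \<chi>(2) by (auto simp: hom_def comp_assoc)
  qed
  show "\<exists>!g. g \<in> hom C (trg C m) LE \<and> cmp C g m = f"
  proof (rule ex1I[of _ g])
    show "g \<in> hom C (trg C m) LE \<and> cmp C g m = f"
      using g(1) gm mv' by simp
    show "h = g" if "h \<in> hom C (trg C m) LE \<and> cmp C h m = f" for h
      using LE_map_eqI[OF \<sigma> v mv orth_E[OF v(2) mv]] \<sigma>_eq that g(1) gm mv' by simp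
  qed
qed

end

lemma Mtimes_arr:
  assumes "\<forall>m \<in> M. is_mono C m" "m \<in> Mtimes C M"
  shows "m \<in> arr C"
  using assms(2)
proof induction
  case (base m)
  then show ?case
    using assms(1) unfolding is_mono_def by blast
next
  case (prod m X P p1 p2 Q q1 q2 u)
  then show ?case
    unfolding hom_def by blast
qed

theorem mainTheorem10:
  fixes C :: "('o, 'a) cat" and D M :: "'a set"
    and one Sig E LE :: 'o and tp eta :: 'a
  assumes "lccc C"
    and "dominance C D one tp Sig"
    and "\<forall>m \<in> M. is_mono C m"
    and "partial_map_classifier C D E LE eta"
    and "orth_class C (Mtimes C M) Sig"
    and "orth_class C (MSigma C D M) E"
  shows "orth_class C (Mtimes C M) LE"
  unfolding orth_class_def
proof
  interpret sigma_partial_map_classifier C D one Sig tp E LE eta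
    using assms(1,2,4) by unfold_locales (auto simp: lccc_def)
  fix m
  assume m: "m \<in> Mtimes C M"
  show "orth C m LE"
  proof (rule orth_LE)
    show "m \<in> arr C"
      using Mtimes_arr[OF assms(3) m] .
    show "orth C m Sig"
      using assms(5) m unfolding orth_class_def by blast
    show "orth C w E" if "v \<in> D" "is_pullback C m v u w" for u v w
      using assms(6) MSigma.pb[OF MSigma.base[OF m] that] unfolding orth_class_def by blast
  qed
qed

end
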